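(* There is no binary self-orthogonal $[46,6,22]$ code.
   Context: A binary linear code $C$ is self-orthogonal if $C\subseteq C^\perp$. *)

theory Defs
  imports Main
begin

text \<open>Binary words of length n are boolean lists of length n; True represents 1 in GF(2).
  Addition in GF(2)^n is pointwise exclusive or.\<close>

definition words :: "nat \<Rightarrow> bool list set" where
  "words n = {x. length x = n}"

definition vadd :: "bool list \<Rightarrow> bool list \<Rightarrow> bool list" where
  "vadd x y = map2 (\<noteq>) x y"

text \<open>A binary linear code of length n: a GF(2)-subspace of GF(2)^n (over GF(2) the only
  scalars are 0 and 1, so a subspace is a nonempty subset closed under addition).\<close>

definition binary_linear_code :: "nat \<Rightarrow> bool list set \<Rightarrow> bool" where
  "binary_linear_code n C \<longleftrightarrow> C \<subseteq> words n \<and> replicate n False \<in> C \<and>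
     (\<forall>x\<in>C. \<forall>y\<in>C. vadd x y \<in> C)"

text \<open>Dimension k of a binary linear code C: C has exactly 2^k elements
  (a k-dimensional GF(2)-space has 2^k vectors).\<close>

definition code_dim :: "bool list set \<Rightarrow> nat \<Rightarrow> bool" where
  "code_dim C k \<longleftrightarrow> finite C \<and> card C = 2 ^ k"

definition hamming_dist :: "bool list \<Rightarrow> bool list \<Rightarrow> nat" where
  "hamming_dist x y = card {i. i < length x \<and> x ! i \<noteq> y ! i}"

definition min_dist :: "bool list set \<Rightarrow> nat" where
  "min_dist C = Min {hamming_dist x y | x y. x \<in> C \<and> y \<in> C \<and> x \<noteq> y}"

definition inner2 :: "bool list \<Rightarrow> bool list \<Rightarrow> bool" where
  "inner2 x y = odd (card {i. i < length x \<and> x ! i \<and> y ! i})"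

definition dual_code :: "nat \<Rightarrow> bool list set \<Rightarrow> bool list set" where
  "dual_code n C = {y \<in> words n. \<forall>x\<in>C. \<not> inner2 x y}"

definition self_orthogonal :: "nat \<Rightarrow> bool list set \<Rightarrow> bool" where
  "self_orthogonal n C \<longleftrightarrow> C \<subseteq> dual_code n C"

end

theory Submission
  imports Defs
begin

text \<open>In a self-orthogonal binary code all weights are even and any two codewords meet in an even
  number of positions, so wt (x + y) = wt x + wt y - 2 |supp x \<inter> supp y| shows that the
  doubly-even codewords form a subcode of index at most 2. For the hypothetical [46,6,22] code this
  subcode has at least 32 words, all nonzero ones of weight at least 24. But in a binary linear
  code of length n every coordinate is 1 on at most half of the words, so the average weight is at
  most n/2, and 24 (|D| - 1) \<le> 23 |D| forces |D| \<le> 24.\<close>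

definition supp :: "bool list \<Rightarrow> nat set" where
  "supp x = {i. i < length x \<and> x ! i}"

definition weight :: "bool list \<Rightarrow> nat" where
  "weight x = card (supp x)"

definition doubly_even_subcode :: "bool list set \<Rightarrow> bool list set" where
  "doubly_even_subcode C = {x \<in> C. 4 dvd weight x}"

lemma finite_supp [simp]: "finite (supp x)"
  unfolding supp_def by auto

lemma weight_replicate_False [simp]: "weight (replicate n False) = 0"
  unfolding weight_def supp_def by simp

lemma length_vadd [simp]: "length (vadd x y) = min (length x) (length y)"
  unfolding vadd_def by simp

lemma nth_vadd [simp]: "i < length x \<Longrightarrow> i < length y \<Longrightarrow> vadd x y ! i = (x ! i \<noteq> y ! i)"
  unfolding vadd_def by simp

lemma vadd_vadd_cancel: "length x = length y \<Longrightarrow> vadd x (vadd x y) = y"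
  by (rule nth_equalityI) auto

lemma inj_on_vadd: "inj_on (vadd a) (words (length a))"
proof (rule inj_onI)
  fix x y
  assume x: "x \<in> words (length a)" and y: "y \<in> words (length a)" and eq: "vadd a x = vadd a y"
  have "x = vadd a (vadd a x)"
    using x by (simp add: vadd_vadd_cancel words_def)
  also have "\<dots> = y"
    using y by (simp add: eq vadd_vadd_cancel words_def)
  finally show "x = y" .
qed

lemma card_le_card_if_vadd_maps_into:
  assumes "finite B" "A \<subseteq> words (length a)" "vadd a ` A \<subseteq> B"
  shows "card A \<le> card B"
  using card_inj_on_le[OF inj_on_subset[OF inj_on_vadd assms(2)] assms(3,1)] .

lemma supp_vadd:
  "length x = length y \<Longrightarrow> supp (vadd x y) = (supp x \<union> supp y) - (supp x \<inter> supp y)"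
  unfolding supp_def by auto

lemma card_Un_Diff_Int:
  assumes "finite A" "finite B"
  shows "card ((A \<union> B) - (A \<inter> B)) + 2 * card (A \<inter> B) = card A + card B"
proof -
  have "card (A \<inter> B) \<le> card (A \<union> B)"
    using assms by (intro card_mono) auto
  moreover have "card ((A \<union> B) - (A \<inter> B)) = card (A \<union> B) - card (A \<inter> B)"
    using assms by (intro card_Diff_subset) auto
  ultimately show ?thesis
    using card_Un_Int[OF assms] by linarith
qed

lemma weight_vadd:
  "length x = length y \<Longrightarrow>
     weight (vadd x y) + 2 * card (supp x \<inter> supp y) = weight x + weight y"
  unfolding weight_def by (simp only: supp_vadd) (rule card_Un_Diff_Int; simp)

lemma hamming_dist_replicate_False:
  "hamming_dist x (replicate (length x) False) = weight x"
  unfolding hamming_dist_def weight_def supp_def by (intro arg_cong[where f = card]) auto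

lemma four_dvd_add_if_even_mod_four_eq: "even (a :: nat) \<Longrightarrow> a mod 4 = b mod 4 \<Longrightarrow> 4 dvd a + b"
  by (auto simp add: mod_add_eq[symmetric] elim!: evenE) presburger

lemma card_filter_eq_sum: "finite A \<Longrightarrow> card {x \<in> A. P x} = (\<Sum>x\<in>A. if P x then 1 else 0)"
  unfolding card_eq_sum by (rule sum.inter_filter)

lemma sum_weight_eq_sum_coordinate_counts:
  assumes "D \<subseteq> words n" "finite D"
  shows "(\<Sum>x\<in>D. weight x) = (\<Sum>i<n. card {x \<in> D. x ! i})"
proof -
  have "weight x = (\<Sum>i<n. if x ! i then 1 else 0)" if "x \<in> D" for x
  proof -
    have "supp x = {i \<in> {..<n}. x ! i}"
      using that assms(1) unfolding supp_def words_def by auto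
    then show ?thesis
      unfolding weight_def by (simp only:) (rule card_filter_eq_sum, simp)
  qed
  then have "(\<Sum>x\<in>D. weight x) = (\<Sum>x\<in>D. \<Sum>i<n. if x ! i then 1 else 0)"
    by (rule sum.cong[OF refl])
  also have "\<dots> = (\<Sum>i<n. \<Sum>x\<in>D. if x ! i then 1 else 0)"
    by (rule sum.swap)
  also have "\<dots> = (\<Sum>i<n. card {x \<in> D. x ! i})"
    by (simp only: card_filter_eq_sum[OF assms(2)])
  finally show ?thesis .
qed

context
  fixes n :: nat and C :: "bool list set"
  assumes code: "binary_linear_code n C"
begin

lemma code_subset_words: "C \<subseteq> words n"
  using code unfolding binary_linear_code_def by (elim conjE)

lemma code_length: "x \<in> C \<Longrightarrow> length x = n"
  using code_subset_words unfolding words_def by blast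

lemma code_zero: "replicate n False \<in> C"
  using code unfolding binary_linear_code_def by (elim conjE)

lemma code_vadd_closed: "x \<in> C \<Longrightarrow> y \<in> C \<Longrightarrow> vadd x y \<in> C"
  using code unfolding binary_linear_code_def by blast

lemma code_finite: "finite C"
  using code_subset_words finite_list_length[where 'a = bool, of n]
  unfolding words_def by (rule finite_subset)

lemma min_dist_le_weight:
  assumes "x \<in> C" "x \<noteq> replicate n False"
  shows "min_dist C \<le> weight x"
proof -
  let ?dists = "{hamming_dist x y | x y. x \<in> C \<and> y \<in> C \<and> x \<noteq> y}"
  have "?dists \<subseteq> (\<lambda>(x, y). hamming_dist x y) ` (C \<times> C)"
    by auto
  moreover have "finite ((\<lambda>(x, y). hamming_dist x y) ` (C \<times> C))"
    using code_finite by simp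
  ultimately have "finite ?dists"
    by (rule finite_subset)
  moreover have "hamming_dist x (replicate n False) \<in> ?dists"
    using assms code_zero by auto
  ultimately have "min_dist C \<le> hamming_dist x (replicate n False)"
    unfolding min_dist_def by (rule Min_le)
  then show ?thesis
    using hamming_dist_replicate_False[of x] code_length[OF assms(1)] by simp
qed

lemma coordinate_ones_le_half:
  assumes "i < n"
  shows "2 * card {x \<in> C. x ! i} \<le> card C"
proof -
  have split: "card {x \<in> C. x ! i} + card {x \<in> C. \<not> x ! i} = card C"
    using code_finite by (subst card_Un_disjoint[symmetric]) (auto intro: arg_cong[where f = card])
  have "card {x \<in> C. x ! i} \<le> card {x \<in> C. \<not> x ! i}"
  proof (cases "{x \<in> C. x ! i} = {}")
    case False
    then obtain b where b: "b \<in> C" "b ! i" by blast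
    have "vadd b ` {x \<in> C. x ! i} \<subseteq> {x \<in> C. \<not> x ! i}"
      using b assms code_length code_vadd_closed by auto
    then show ?thesis
      using code_finite code_subset_words code_length[OF b(1)]
      by (intro card_le_card_if_vadd_maps_into) auto
  qed (simp only: card.empty zero_le)
  then show ?thesis using split by linarith
qed

lemma plotkin_bound:
  assumes "\<And>x. x \<in> C \<Longrightarrow> x \<noteq> replicate n False \<Longrightarrow> d \<le> weight x"
  shows "2 * d * (card C - 1) \<le> n * card C"
proof -
  let ?zero = "replicate n False"
  have "d * (card C - 1) = (\<Sum>x\<in>C - {?zero}. d)"
    using code_finite code_zero by simp
  also have "\<dots> \<le> (\<Sum>x\<in>C - {?zero}. weight x)"
    using assms by (intro sum_mono) auto
  also have "\<dots> = (\<Sum>x\<in>C. weight x)"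
    using code_finite code_zero by (simp add: sum_diff1_nat)
  also have "\<dots> = (\<Sum>i<n. card {x \<in> C. x ! i})"
    using code_subset_words code_finite by (rule sum_weight_eq_sum_coordinate_counts)
  finally have "2 * d * (card C - 1) \<le> (\<Sum>i<n. 2 * card {x \<in> C. x ! i})"
    unfolding sum_distrib_left[symmetric] mult.assoc by simp
  also have "\<dots> \<le> (\<Sum>i<n. card C)"
    using coordinate_ones_le_half by (intro sum_mono) auto
  finally show ?thesis by simp
qed

context
  assumes self_orth: "self_orthogonal n C"
begin

lemma self_orthogonal_even_inter:
  assumes "x \<in> C" "y \<in> C"
  shows "even (card (supp x \<inter> supp y))"
proof -
  have "\<not> inner2 x y"
    using self_orth assms unfolding self_orthogonal_def dual_code_def by auto
  moreover have "{i. i < length x \<and> x ! i \<and> y ! i} = supp x \<inter> supp y"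
    using code_length assms unfolding supp_def by auto
  ultimately show ?thesis
    unfolding inner2_def by simp
qed

lemma self_orthogonal_even_weight: "x \<in> C \<Longrightarrow> even (weight x)"
  using self_orthogonal_even_inter[of x x] unfolding weight_def by simp

lemma self_orthogonal_dvd_weight_vadd:
  assumes "x \<in> C" "y \<in> C" "weight x mod 4 = weight y mod 4"
  shows "4 dvd weight (vadd x y)"
proof -
  obtain m where "card (supp x \<inter> supp y) = 2 * m"
    using self_orthogonal_even_inter[OF assms(1,2)] by blast
  then have "weight (vadd x y) + 4 * m = weight x + weight y"
    using weight_vadd[of x y] code_length[OF assms(1)] code_length[OF assms(2)] by simp
  moreover have "4 dvd weight x + weight y"
    using self_orthogonal_even_weight[OF assms(1)] assms(3) by (rule four_dvd_add_if_even_mod_four_eq)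
  ultimately show ?thesis
    by (metis dvd_add_left_iff dvd_triv_left)
qed

lemma binary_linear_code_doubly_even_subcode: "binary_linear_code n (doubly_even_subcode C)"
  unfolding binary_linear_code_def
proof (intro conjI ballI)
  show "doubly_even_subcode C \<subseteq> words n"
    using code_subset_words unfolding doubly_even_subcode_def by blast
  show "replicate n False \<in> doubly_even_subcode C"
    using code_zero unfolding doubly_even_subcode_def by simp
  fix x y
  assume "x \<in> doubly_even_subcode C" "y \<in> doubly_even_subcode C"
  then have "x \<in> C" "y \<in> C" "weight x mod 4 = weight y mod 4"
    unfolding doubly_even_subcode_def by auto
  then show "vadd x y \<in> doubly_even_subcode C"
    using code_vadd_closed self_orthogonal_dvd_weight_vadd
    unfolding doubly_even_subcode_def by blast
qed

lemma card_le_twice_card_doubly_even_subcode: "card C \<le> 2 * card (doubly_even_subcode C)"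
proof -
  let ?D = "doubly_even_subcode C"
  have sub: "?D \<subseteq> C"
    unfolding doubly_even_subcode_def by blast
  have "card (C - ?D) \<le> card ?D"
  proof (cases "C - ?D = {}")
    case False
    then obtain a where a: "a \<in> C" "a \<notin> ?D" by blast
    have "vadd a ` (C - ?D) \<subseteq> ?D"
    proof
      fix y assume "y \<in> vadd a ` (C - ?D)"
      then obtain x where x: "x \<in> C" "x \<notin> ?D" "y = vadd a x" by blast
      have "\<not> 4 dvd weight a" "\<not> 4 dvd weight x"
        using a x unfolding doubly_even_subcode_def by auto
      moreover have "even (weight a)" "even (weight x)"
        using a x self_orthogonal_even_weight by auto
      ultimately have "weight a mod 4 = weight x mod 4"
        by presburger
      then show "y \<in> ?D"
        using self_orthogonal_dvd_weight_vadd code_vadd_closed a x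
        unfolding doubly_even_subcode_def by simp
    qed
    then show ?thesis
      using code_finite code_subset_words code_length[OF a(1)] sub
      by (intro card_le_card_if_vadd_maps_into) (auto intro: finite_subset)
  qed (simp only: card.empty zero_le)
  moreover have "card (C - ?D) = card C - card ?D" "card ?D \<le> card C"
    using sub code_finite by (auto intro: card_Diff_subset card_mono finite_subset)
  ultimately show ?thesis by linarith
qed

end

end

theorem proposition6p7:
  shows "\<not> (\<exists>C. binary_linear_code 46 C \<and> code_dim C 6 \<and> min_dist C = 22
                 \<and> self_orthogonal 46 C)"
proof
  assume "\<exists>C. binary_linear_code 46 C \<and> code_dim C 6 \<and> min_dist C = 22 \<and> self_orthogonal 46 C"
  then obtain C where code: "binary_linear_code 46 C" and dim: "code_dim C 6"
    and dist: "min_dist C = 22" and self_orth: "self_orthogonal 46 C" by blast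
  let ?D = "doubly_even_subcode C"
  have "64 \<le> 2 * card ?D"
    using card_le_twice_card_doubly_even_subcode[OF code self_orth] dim
    unfolding code_dim_def by simp
  moreover have "24 \<le> weight x" if "x \<in> ?D" "x \<noteq> replicate 46 False" for x
  proof -
    have "22 \<le> weight x" "4 dvd weight x"
      using that min_dist_le_weight[OF code] dist unfolding doubly_even_subcode_def by auto
    then show ?thesis by presburger
  qed
  then have "2 * 24 * (card ?D - 1) \<le> 46 * card ?D"
    by (rule plotkin_bound[OF binary_linear_code_doubly_even_subcode[OF code self_orth]])
  ultimately show False by linarith
qed

end
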